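(* Let $\mathcal{A}^+=\{\mathcal{A}_1,\dots,\mathcal{A}_v\}$ be a finite collection and let $F:\mathcal{A}^+\to\mathbb{R}_{\ge 0}$ satisfy $c:=\sum_{u=1}^v F(\mathcal{A}_u)>0$. Let $\mathcal{A}^*\in\arg\max_{\mathcal{A}\in\mathcal{A}^+}F(\mathcal{A})$. Let $r$ be a positive integer with $r\ge \frac{c}{F(\mathcal{A}^* )}-1$. Form $\mathcal{R}$ as the set of elements obtained by $r$ independent draws from $\mathcal{A}^+$, each with distribution $\Pr(\mathcal{A})=\frac{1}{c}F(\mathcal{A})$. Let $\mathcal{A}'\in\arg\max_{\mathcal{A}\in\mathcal{R}}F(\mathcal{A})$. Then $$F(\mathcal{A}^* )-\mathbb{E}[F(\mathcal{A}')]\le\Bigl(\frac{r}{1+r}\Bigr)^{r}F(\mathcal{A}^* ).$$ *)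

theory Defs
  imports "HOL-Probability.Probability"
begin

definition weighted_pmf :: "'a set \<Rightarrow> ('a \<Rightarrow> real) \<Rightarrow> 'a pmf" where
  "weighted_pmf S F = embed_pmf (\<lambda>x. if x \<in> S then F x / sum F S else 0)"

end

theory Submission
  imports Defs "HOL-Probability.Product_PMF"
begin

text \<open>
  Since F is nonnegative, the best sampled value is at least F(A*) whenever A* itself is among
  the r draws and at least 0 otherwise, so
  E[F(A')] \<ge> F(A*) (1 - (1 - p)^r) with p = F(A*)/c the probability of drawing A*.
  The hypothesis on r is equivalent to 1 - p \<le> r/(1+r).
\<close>

lemma measure_pmf_prob_pair_Times:
  "measure_pmf.prob (pair_pmf M N) (A \<times> B) = measure_pmf.prob M A * measure_pmf.prob N B"
proof -
  have "measure_pmf.prob (pair_pmf M N) (A \<times> B)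
      = measure_pmf.prob (pair_pmf M N) ((A \<inter> set_pmf M) \<times> (B \<inter> set_pmf N))"
    by (subst measure_Int_set_pmf[symmetric]) (auto intro: arg_cong2[where f = measure])
  also have "\<dots> = measure_pmf.prob M (A \<inter> set_pmf M) * measure_pmf.prob N (B \<inter> set_pmf N)"
    by (rule measure_pmf_prob_product) auto
  finally show ?thesis
    by (simp add: measure_Int_set_pmf)
qed

lemma replicate_pmf_Suc_pair:
  "replicate_pmf (Suc n) p = map_pmf (\<lambda>(x, xs). x # xs) (pair_pmf p (replicate_pmf n p))"
  by (simp add: pair_pmf_def map_bind_pmf map_return_pmf)

lemma measure_replicate_pmf_lists:
  "measure_pmf.prob (replicate_pmf n p) {xs. set xs \<subseteq> B} = measure_pmf.prob p B ^ n"
proof (induction n)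
  case 0
  then show ?case by simp
next
  case (Suc n)
  have "(\<lambda>(x, xs). x # xs) -` {xs. set xs \<subseteq> B} = B \<times> {xs. set xs \<subseteq> B}"
    by auto
  then show ?case
    unfolding replicate_pmf_Suc_pair measure_map_pmf
    by (simp add: measure_pmf_prob_pair_Times Suc)
qed

lemma measure_replicate_pmf_member:
  "measure_pmf.prob (replicate_pmf n p) {xs. a \<in> set xs} = 1 - (1 - pmf p a) ^ n"
proof -
  have "measure_pmf.prob p (- {a}) = 1 - pmf p a"
    using measure_pmf.prob_compl[of "{a}" p] by (simp add: measure_pmf_single Compl_eq_Diff_UNIV)
  moreover have "{xs. a \<in> set xs} = - {xs. set xs \<subseteq> - {a}}"
    by auto
  ultimately show ?thesis
    using measure_pmf.prob_compl[of "{xs. set xs \<subseteq> - {a}}" "replicate_pmf n p"]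
    by (simp add: measure_replicate_pmf_lists Compl_eq_Diff_UNIV)
qed

lemma expectation_Max_replicate_pmf_ge:
  fixes F :: "'a \<Rightarrow> real"
  assumes "finite (set_pmf p)" and "\<And>x. x \<in> set_pmf p \<Longrightarrow> F x \<ge> 0" and "n > 0"
  shows "F a * (1 - (1 - pmf p a) ^ n)
           \<le> measure_pmf.expectation (replicate_pmf n p) (\<lambda>xs. Max (F ` set xs))"
proof -
  let ?R = "replicate_pmf n p" and ?E = "{xs. a \<in> set xs}"
  have fin: "finite (set_pmf ?R)"
  proof -
    have "finite {xs. set xs \<subseteq> set_pmf p \<and> length xs = n}"
      using assms(1) by (rule finite_lists_length_eq)
    then show ?thesis
      by (simp add: set_replicate_pmf lists_eq_set)
  qed
  have "AE xs in ?R. F a * indicator ?E xs \<le> Max (F ` set xs)"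
  proof (rule AE_pmfI)
    fix xs assume "xs \<in> set_pmf ?R"
    then have xs: "set xs \<subseteq> set_pmf p" "xs \<noteq> []"
      using assms(3) by (auto simp: set_replicate_pmf)
    then obtain y where "y \<in> set xs"
      by (metis list.set_sel(1))
    then have "0 \<le> Max (F ` set xs)"
      using xs assms(2) by (meson Max_ge List.finite_set finite_imageI image_eqI order_trans subsetD)
    then show "F a * indicator ?E xs \<le> Max (F ` set xs)"
      by (auto simp: indicator_def)
  qed
  then have "measure_pmf.expectation ?R (\<lambda>xs. F a * indicator ?E xs)
               \<le> measure_pmf.expectation ?R (\<lambda>xs. Max (F ` set xs))"
    by (intro integral_mono_AE integrable_measure_pmf_finite fin)
  then show ?thesis
    by (simp add: measure_replicate_pmf_member)
qed

lemma pmf_weighted_pmf: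
  assumes "finite S" and "\<forall>A\<in>S. F A \<ge> 0" and "sum F S > 0"
  shows "pmf (weighted_pmf S F) x = (if x \<in> S then F x / sum F S else 0)"
  unfolding weighted_pmf_def
proof (rule pmf_embed_pmf)
  show "0 \<le> (if x \<in> S then F x / sum F S else 0)" for x
    using assms by auto
  have "(\<integral>\<^sup>+x. ennreal (if x \<in> S then F x / sum F S else 0) \<partial>count_space UNIV)
      = (\<Sum>x\<in>S. ennreal (F x / sum F S))"
    using assms(1) by (subst nn_integral_count_space') auto
  also have "\<dots> = ennreal (\<Sum>x\<in>S. F x / sum F S)"
    using assms by (subst sum_ennreal) auto
  also have "(\<Sum>x\<in>S. F x / sum F S) = 1"
    using assms by (simp add: sum_divide_distrib[symmetric])
  finally show "(\<integral>\<^sup>+x. ennreal (if x \<in> S then F x / sum F S else 0) \<partial>count_space UNIV) = 1"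
    by simp
qed

lemma set_pmf_weighted_pmf_subset:
  assumes "finite S" and "\<forall>A\<in>S. F A \<ge> 0" and "sum F S > 0"
  shows "set_pmf (weighted_pmf S F) \<subseteq> S"
  using pmf_weighted_pmf[OF assms] by (auto simp: set_pmf_eq)

lemma one_minus_ratio_le:
  fixes M c :: real and r :: nat
  assumes "M > 0" and "c > 0" and "real r \<ge> c / M - 1"
  shows "1 - M / c \<le> real r / (1 + real r)"
proof -
  from assms(1,3) have "c \<le> (1 + real r) * M"
    by (simp add: field_simps)
  with assms(1,2) show ?thesis
    by (simp add: field_simps)
qed

theorem theorem4:
  fixes S :: "'a set" and F :: "'a \<Rightarrow> real" and Astar :: 'a and r :: nat
  assumes "finite S"
    and "\<forall>A\<in>S. F A \<ge> 0"
    and "sum F S > 0"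
    and "Astar \<in> S" and "\<forall>A\<in>S. F A \<le> F Astar"
    and "r > 0"
    and "real r \<ge> sum F S / F Astar - 1"
  shows "F Astar - measure_pmf.expectation (replicate_pmf r (weighted_pmf S F))
             (\<lambda>xs. Max (F ` set xs))
         \<le> (real r / (1 + real r)) ^ r * F Astar"
proof -
  let ?q = "weighted_pmf S F" and ?p = "F Astar / sum F S"
  have set_q: "set_pmf ?q \<subseteq> S"
    using set_pmf_weighted_pmf_subset[OF assms(1-3)] .
  have pmf_Astar: "pmf ?q Astar = ?p"
    using pmf_weighted_pmf[OF assms(1-3)] assms(4) by simp
  have "F Astar > 0"
  proof (rule ccontr)
    assume "\<not> F Astar > 0"
    with assms(2,5) have "\<forall>A\<in>S. F A = 0"
      by force
    with assms(3) show False
      by simp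
  qed
  have "F Astar \<le> sum F S"
    using assms(1,2,4) by (intro member_le_sum) auto
  with assms(3) have "0 \<le> 1 - ?p"
    by (simp add: field_simps)
  moreover have "1 - ?p \<le> real r / (1 + real r)"
    using \<open>F Astar > 0\<close> assms(3,7) by (rule one_minus_ratio_le)
  ultimately have "F Astar * (1 - ?p) ^ r \<le> F Astar * (real r / (1 + real r)) ^ r"
    using \<open>F Astar > 0\<close> by (intro mult_left_mono power_mono) auto
  moreover have "F Astar * (1 - (1 - ?p) ^ r)
      \<le> measure_pmf.expectation (replicate_pmf r ?q) (\<lambda>xs. Max (F ` set xs))"
  proof -
    have "finite (set_pmf ?q)"
      using assms(1) set_q by (rule finite_subset[rotated])
    moreover have "F x \<ge> 0" if "x \<in> set_pmf ?q" for x
      using that set_q assms(2) by blast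
    ultimately show ?thesis
      using expectation_Max_replicate_pmf_ge[of ?q F r Astar] assms(6)
      unfolding pmf_Astar by blast
  qed
  ultimately show ?thesis
    unfolding right_diff_distrib mult_1_right by (simp add: mult.commute)
qed

end
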